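(* If $\gcd(A^3,B^2)=S(x,y)$, then $\gcd(f^3,g^2)=S(t,1)$.
   Context: Fix $\upsilon\in\{1,2\}$ and positive integers $m,\tau$ with $m=1$ or $\upsilon\tau=1$. Let $f,g\in\mathbb{Z}[t]$ with $4f^3+27g^2\ne0$, no common real root, and $\max\{\frac12\deg f,\frac13\deg g\}=\frac{2m}{\upsilon\tau}$. Let $\varsigma=2m$ if $\upsilon=1$, $\varsigma=1$ if $\upsilon=2$; $A(x,y)=y^{2\varsigma}f(x/y^\tau)$, $B(x,y)=y^{3\varsigma}g(x/y^\tau)\in\mathbb{Z}[x,y]$. For polynomials $F,G$ (in any number of variables), $\gcd(F,G)$ denotes the polynomial with integer coefficients, of highest possible degree and smallest possible positive leading coefficient (in lexicographic ordering), dividing both $F$ and $G$ in the polynomial ring over $\mathbb{Q}$. *)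

theory Defs
  imports "HOL-Computational_Algebra.Polynomial" Complex_Main
begin

text \<open>Bivariate polynomials in x,y are represented as int poly poly:
  the outer variable is x, coefficients are polynomials in y.
  Lexicographic order with x > y: the leading coefficient is
  lead_coeff (lead_coeff P).\<close>

definition total_degree :: "'a::zero poly poly \<Rightarrow> nat" where
  "total_degree P = Max ({0} \<union> {i + degree (coeff P i) | i. coeff P i \<noteq> 0})"

definition ratQ1 :: "int poly \<Rightarrow> rat poly" where
  "ratQ1 p = map_poly of_int p"

definition ratQ2 :: "int poly poly \<Rightarrow> rat poly poly" where
  "ratQ2 P = map_poly (map_poly of_int) P"

definition gcd_cand1 :: "int poly \<Rightarrow> int poly \<Rightarrow> int poly \<Rightarrow> bool" where
  "gcd_cand1 F G D \<longleftrightarrow> ratQ1 D dvd ratQ1 F \<and> ratQ1 D dvd ratQ1 G \<and>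
     (\<forall>E::rat poly. E dvd ratQ1 F \<and> E dvd ratQ1 G \<longrightarrow> degree E \<le> degree D) \<and>
     lead_coeff D > 0"

definition gcdQ1 :: "int poly \<Rightarrow> int poly \<Rightarrow> int poly" where
  "gcdQ1 F G = (THE D. gcd_cand1 F G D \<and>
     (\<forall>D'. gcd_cand1 F G D' \<longrightarrow> lead_coeff D \<le> lead_coeff D'))"

definition gcd_cand2 :: "int poly poly \<Rightarrow> int poly poly \<Rightarrow> int poly poly \<Rightarrow> bool" where
  "gcd_cand2 F G D \<longleftrightarrow> ratQ2 D dvd ratQ2 F \<and> ratQ2 D dvd ratQ2 G \<and>
     (\<forall>E::rat poly poly. E dvd ratQ2 F \<and> E dvd ratQ2 G \<longrightarrow> total_degree E \<le> total_degree D) \<and>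
     lead_coeff (lead_coeff D) > 0"

definition gcdQ2 :: "int poly poly \<Rightarrow> int poly poly \<Rightarrow> int poly poly" where
  "gcdQ2 F G = (THE D. gcd_cand2 F G D \<and>
     (\<forall>D'. gcd_cand2 F G D' \<longrightarrow> lead_coeff (lead_coeff D) \<le> lead_coeff (lead_coeff D')))"

text \<open>Weighted homogenization: y^s * f(x / y^tau) = sum_i f_i x^i y^(s - tau*i)
  (exponents are nonnegative under the standing hypotheses).\<close>

definition whom :: "int poly \<Rightarrow> nat \<Rightarrow> nat \<Rightarrow> int poly poly" where
  "whom f s tau = (\<Sum>i\<le>degree f. monom (monom (coeff f i) (s - tau * i)) i)"

definition at_y1 :: "int poly poly \<Rightarrow> int poly" where
  "at_y1 S = map_poly (\<lambda>c. poly c 1) S"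

end

theory Submission
  imports
    Defs
    "HOL-Computational_Algebra.Polynomial_Factorial"
    "HOL-Computational_Algebra.Field_as_Ring"
begin

(* Write H_s(p) = y^s p(x/y^tau) for the weighted homogenisation. Over Q it is multiplicative, so
   with d = gcd(f^3, g^2), f^3 = d u and g^2 = d v, the two homogenised polynomials are
   H(d) y^a H(u) and H(d) y^b H(v), where H(p) has the least admissible weight tau deg p.
   A Bezout relation for the coprime u, v homogenises to one for H(u), H(v) up to a power of y,
   so every common divisor of y^a H(u) and y^b H(v) is a power of the prime y; since y divides
   neither H(u) nor H(v), their gcd over Q is y^(min a b) H(d), which becomes d at y = 1.
   Finally both gcds are fixed only up to a rational factor, and in either case the integer
   representative with the least positive leading coefficient is the primitive one. *)

section \<open>Coefficient maps\<close>

lemma map_poly_hom_add: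
  assumes "h 0 = 0" "\<And>a b. h (a + b) = h a + h b"
  shows "map_poly h (p + q) = map_poly h p + map_poly h q"
  by (intro poly_eqI) (simp add: coeff_map_poly assms)

lemma map_poly_hom_mult:
  fixes h :: "'a::comm_semiring_1 \<Rightarrow> 'b::comm_semiring_1"
  assumes h0: "h 0 = 0" and h_add: "\<And>a b. h (a + b) = h a + h b"
    and h_mult: "\<And>a b. h (a * b) = h a * h b"
  shows "map_poly h (p * q) = map_poly h p * map_poly h q"
proof (induction p)
  case (pCons a p)
  then show ?case
    by (simp add: map_poly_pCons[of h, OF h0] map_poly_hom_add[of h, OF h0 h_add]
        map_poly_smult[of h, OF h0 h_mult] h0)
qed simp

lemma map_poly_hom_power:
  fixes h :: "'a::comm_semiring_1 \<Rightarrow> 'b::comm_semiring_1"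
  assumes "h 0 = 0" "\<And>a b. h (a + b) = h a + h b" "\<And>a b. h (a * b) = h a * h b" "h 1 = 1"
  shows "map_poly h (p ^ n) = map_poly h p ^ n"
  by (induction n) (simp_all add: map_poly_hom_mult assms)

lemma coeff_ratQ1: "coeff (ratQ1 p) i = of_int (coeff p i)"
  by (simp add: ratQ1_def coeff_map_poly)

lemma coeff_ratQ2: "coeff (ratQ2 P) i = ratQ1 (coeff P i)"
  by (simp add: ratQ2_def ratQ1_def coeff_map_poly)

lemma coeff_coeff_ratQ2: "coeff (coeff (ratQ2 P) i) j = of_int (coeff (coeff P i) j)"
  by (simp add: coeff_ratQ2 coeff_ratQ1)

lemma ratQ1_eq_iff [simp]: "ratQ1 p = ratQ1 q \<longleftrightarrow> p = q"
  by (simp add: poly_eq_iff coeff_ratQ1)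

lemma ratQ1_eq_0_iff [simp]: "ratQ1 p = 0 \<longleftrightarrow> p = 0"
  by (simp add: ratQ1_def map_poly_eq_0_iff coeff_map_poly poly_eq_iff)

lemma degree_ratQ1 [simp]: "degree (ratQ1 p) = degree p"
  by (simp add: ratQ1_def degree_map_poly)

lemma ratQ1_smult: "ratQ1 (smult c p) = smult (of_int c) (ratQ1 p)"
  by (simp add: ratQ1_def map_poly_smult)

lemma ratQ1_power: "ratQ1 (p ^ n) = ratQ1 p ^ n"
  unfolding ratQ1_def by (rule map_poly_hom_power) auto

lemma ratQ2_power: "ratQ2 (P ^ n) = ratQ2 P ^ n"
  unfolding ratQ2_def by (rule map_poly_hom_power) (auto simp: map_poly_hom_add map_poly_hom_mult)

lemma total_degree_ratQ2 [simp]: "total_degree (ratQ2 P) = total_degree P"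
  by (simp add: total_degree_def coeff_ratQ2)

section \<open>Weighted homogenisation\<close>

definition homog :: "'a::comm_semiring_1 poly \<Rightarrow> nat \<Rightarrow> nat \<Rightarrow> 'a poly poly" where
  "homog p s tau = (\<Sum>i\<le>degree p. monom (monom (coeff p i) (s - tau * i)) i)"

definition y_var :: "'a::comm_semiring_1 poly poly" where
  "y_var = [:monom 1 1:]"

lemma whom_eq_homog: "whom = homog"
  by (simp add: fun_eq_iff whom_def homog_def)

lemma coeff_homog: "coeff (homog p s tau) n = monom (coeff p n) (s - tau * n)"
proof -
  have "coeff (homog p s tau) n =
      (\<Sum>i\<le>degree p. if n = i then monom (coeff p i) (s - tau * i) else 0)"
    unfolding homog_def coeff_sum coeff_monom by (rule sum.cong) auto
  also have "\<dots> = monom (coeff p n) (s - tau * n)"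
    by (cases "n \<le> degree p") (auto simp: coeff_eq_0)
  finally show ?thesis .
qed

lemma homog_0 [simp]: "homog 0 s tau = 0"
  by (simp add: homog_def)

lemma homog_eq_0_iff [simp]: "homog p s tau = 0 \<longleftrightarrow> p = 0"
  by (simp add: poly_eq_iff[of "homog p s tau"] poly_eq_iff[of p] coeff_homog)

lemma degree_homog [simp]: "degree (homog p s tau) = degree p"
proof (cases "p = 0")
  case False
  show ?thesis
  proof (rule antisym)
    show "degree (homog p s tau) \<le> degree p"
      by (rule degree_le) (simp add: coeff_homog coeff_eq_0)
    show "degree p \<le> degree (homog p s tau)"
      by (rule le_degree) (use False in \<open>simp add: coeff_homog\<close>)
  qed
qed simp

lemma lead_coeff_lead_coeff_homog: "lead_coeff (lead_coeff (homog p s tau)) = lead_coeff p"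
  by (cases "p = 0") (simp_all add: coeff_homog degree_monom_eq)

lemma homog_add: "homog (p + q) s tau = homog p s tau + homog q s tau"
  by (rule poly_eqI) (simp add: coeff_homog add_monom)

lemma homog_smult: "homog (smult c p) s tau = smult [:c:] (homog p s tau)"
  by (rule poly_eqI) (simp add: coeff_homog smult_monom)

lemma homog_1: "homog 1 s tau = y_var ^ s"
  by (rule poly_eqI)
    (auto simp: coeff_homog y_var_def poly_const_pow monom_power coeff_pCons split: nat.splits)

lemma homog_mult:
  assumes "tau * degree p \<le> s" "tau * degree q \<le> r"
  shows "homog p s tau * homog q r tau = homog (p * q) (s + r) tau"
proof (rule poly_eqI)
  fix n
  have "monom (coeff p i) (s - tau * i) * monom (coeff q (n - i)) (r - tau * (n - i)) =
        monom (coeff p i * coeff q (n - i)) (s + r - tau * n)" if "i \<le> n" for i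
  proof (cases "coeff p i = 0 \<or> coeff q (n - i) = 0")
    case False
    then have "i \<le> degree p" "n - i \<le> degree q" by (auto intro: le_degree)
    then have "tau * i \<le> s" "tau * (n - i) \<le> r"
      using assms mult_le_mono2 order.trans by blast+
    moreover have "tau * n = tau * i + tau * (n - i)"
      using \<open>i \<le> n\<close> by (simp flip: add_mult_distrib2)
    ultimately show ?thesis by (simp add: mult_monom)
  qed auto
  then show "coeff (homog p s tau * homog q r tau) n = coeff (homog (p * q) (s + r) tau) n"
    by (simp add: coeff_mult coeff_homog monom_sum)
qed

lemma homog_mult_split:
  assumes "tau * (degree p + degree q) \<le> s"
  shows "homog (p * q) s tau = homog p (s - tau * degree q) tau * homog q (tau * degree q) tau"
  using homog_mult[of tau p "s - tau * degree q" q "tau * degree q"] assms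
  by (simp add: add_mult_distrib2)

lemma weighted_degree_power_le:
  fixes p :: "'a::comm_semiring_1 poly"
  assumes "tau * degree p \<le> s"
  shows "tau * degree (p ^ n) \<le> n * s"
proof -
  have "tau * degree (p ^ n) \<le> tau * (n * degree p)"
    by (intro mult_le_mono2) (metis degree_power_le mult.commute)
  also have "\<dots> \<le> n * s"
    using assms by (simp add: mult.left_commute)
  finally show ?thesis .
qed

lemma homog_power:
  assumes "tau * degree p \<le> s"
  shows "homog p s tau ^ n = homog (p ^ n) (n * s) tau"
  by (induction n) (simp_all add: homog_1 homog_mult weighted_degree_power_le assms)

lemma y_var_power_mult_homog:
  assumes "tau * degree p \<le> s"
  shows "y_var ^ j * homog p s tau = homog p (j + s) tau"
  using homog_mult[of tau 1 j p s] assms by (simp add: homog_1)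

lemma ratQ2_whom: "ratQ2 (whom f s tau) = homog (ratQ1 f) s tau"
  by (rule poly_eqI)
    (simp add: coeff_ratQ2 whom_eq_homog coeff_homog ratQ1_def map_poly_monom coeff_map_poly)

lemma at_y1_whom: "at_y1 (whom f s tau) = f"
  by (rule poly_eqI) (simp add: at_y1_def coeff_map_poly whom_eq_homog coeff_homog poly_monom)

lemma ratQ2_whom_power:
  assumes "tau * degree f \<le> s"
  shows "ratQ2 (whom f s tau ^ n) = homog (ratQ1 (f ^ n)) (n * s) tau"
  using assms by (simp add: ratQ2_power ratQ2_whom homog_power ratQ1_power)

lemma y_var_not_dvd_homog:
  fixes u :: "'a::idom poly"
  assumes "u \<noteq> 0"
  shows "\<not> y_var dvd homog u (tau * degree u) tau"
proof
  assume "y_var dvd homog u (tau * degree u) tau"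
  then obtain R where R: "homog u (tau * degree u) tau = y_var * R" by (elim dvdE)
  have "[:lead_coeff u:] = coeff (homog u (tau * degree u) tau) (degree u)"
    by (simp add: coeff_homog monom_0)
  also have "\<dots> = monom 1 1 * coeff R (degree u)"
    by (simp add: R y_var_def)
  finally have "monom 1 1 dvd [:lead_coeff u:]" by simp
  then have "degree (monom (1::'a) 1) \<le> degree [:lead_coeff u:]"
    by (rule dvd_imp_degree_le) (simp add: assms)
  then show False by (simp add: degree_monom_eq)
qed

lemma prime_y_var: "prime (y_var :: 'a::field_gcd poly poly)"
proof -
  have "monom (1::'a) 1 = [:0, 1:]" by (simp add: monom_Suc monom_0)
  moreover have "normalize (monom (1::'a) 1) = monom 1 1" by (simp add: normalize_monom)
  ultimately show ?thesis
    by (simp add: y_var_def prime_def prime_elem_const_poly_iff prime_elem_linear_field_poly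
        normalize_const_poly)
qed

section \<open>Total degree\<close>

text \<open>The total degree of X(x,y) is the x-degree of X(x, xy); the substitution is a ring
  homomorphism, which makes the total degree additive.\<close>

definition subst_xy :: "'a::comm_semiring_1 poly \<Rightarrow> 'a poly poly" where
  "subst_xy c = poly (map_poly (\<lambda>a. [:[:a:]:]) c) [:0, [:0, 1:]:]"

definition subst_y_xy :: "'a::comm_semiring_1 poly poly \<Rightarrow> 'a poly poly" where
  "subst_y_xy X = poly (map_poly subst_xy X) [:0, 1:]"

lemma subst_xy_0 [simp]: "subst_xy 0 = 0"
  by (simp add: subst_xy_def)

lemma subst_xy_add: "subst_xy (a + b) = subst_xy a + subst_xy b"
  unfolding subst_xy_def by (subst map_poly_hom_add) (auto simp: poly_add)

lemma subst_xy_mult: "subst_xy (a * b) = subst_xy a * subst_xy b"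
  unfolding subst_xy_def by (subst map_poly_hom_mult) (auto simp: poly_mult)

lemma subst_y_xy_mult: "subst_y_xy (X * Y) = subst_y_xy X * subst_y_xy Y"
  unfolding subst_y_xy_def
  by (subst map_poly_hom_mult) (auto simp: poly_mult subst_xy_add subst_xy_mult)

lemma coeff_coeff_subst_xy: "coeff (coeff (subst_xy c) n) j = (if j = n then coeff c j else 0)"
proof (induction c arbitrary: n j)
  case (pCons a c)
  have "subst_xy (pCons a c) = [:[:a:]:] + pCons 0 (smult [:0, 1:] (subst_xy c))"
    by (simp add: subst_xy_def map_poly_pCons)
  then show ?case
    using pCons.IH by (cases n; cases j) (auto simp: coeff_pCons)
qed (simp add: subst_xy_def)

lemma coeff_coeff_subst_y_xy:
  "coeff (coeff (subst_y_xy X) n) j = (if j \<le> n then coeff (coeff X (n - j)) j else 0)"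
proof (induction X arbitrary: n j)
  case (pCons c X)
  have "subst_y_xy (pCons c X) = subst_xy c + pCons 0 (subst_y_xy X)"
    by (simp add: subst_y_xy_def map_poly_pCons)
  then show ?case
    using pCons.IH
    by (cases n) (auto simp: coeff_coeff_subst_xy coeff_pCons Suc_diff_le split: nat.splits)
qed (simp add: subst_y_xy_def)

lemma subst_y_xy_eq_0_iff [simp]: "subst_y_xy X = 0 \<longleftrightarrow> X = 0"
proof
  assume "subst_y_xy X = 0"
  then have "coeff (coeff X i) j = 0" for i j
    using coeff_coeff_subst_y_xy[of X "i + j" j] by simp
  then show "X = 0" by (simp add: poly_eq_iff)
qed (simp add: subst_y_xy_def)

lemma finite_total_degree_set: "finite {i + degree (coeff P i) |i. coeff P i \<noteq> 0}"
proof (rule finite_subset)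
  show "{i + degree (coeff P i) |i. coeff P i \<noteq> 0} \<subseteq> (\<lambda>i. i + degree (coeff P i)) ` {..degree P}"
    by (auto intro: le_degree)
qed simp

lemma total_degree_ge: "coeff P i \<noteq> 0 \<Longrightarrow> i + degree (coeff P i) \<le> total_degree P"
  unfolding total_degree_def using finite_total_degree_set[of P] by (intro Max_ge) auto

lemma total_degree_attained:
  assumes "P \<noteq> 0"
  obtains i where "coeff P i \<noteq> 0" "total_degree P = i + degree (coeff P i)"
proof -
  have "total_degree P \<in> {0} \<union> {i + degree (coeff P i) |i. coeff P i \<noteq> 0}"
    unfolding total_degree_def using finite_total_degree_set[of P] by (intro Max_in) auto
  moreover have "coeff P (degree P) \<noteq> 0" using assms by simp
  ultimately show ?thesis using that total_degree_ge[of P] by fastforce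
qed

lemma degree_subst_y_xy: "degree (subst_y_xy P) = total_degree P"
proof (rule antisym)
  show "degree (subst_y_xy P) \<le> total_degree P"
  proof (rule degree_le, intro allI impI poly_eqI)
    fix n j assume "total_degree P < n"
    then show "coeff (coeff (subst_y_xy P) n) j = coeff 0 j"
      using total_degree_ge[of P "n - j"] le_degree[of "coeff P (n - j)" j]
      by (force simp: coeff_coeff_subst_y_xy)
  qed
  show "total_degree P \<le> degree (subst_y_xy P)"
  proof (cases "P = 0")
    case False
    then obtain i where i: "coeff P i \<noteq> 0" "total_degree P = i + degree (coeff P i)"
      by (rule total_degree_attained)
    then have "coeff (coeff (subst_y_xy P) (total_degree P)) (degree (coeff P i)) \<noteq> 0"
      by (simp add: coeff_coeff_subst_y_xy)
    then show ?thesis by (metis coeff_0 le_degree)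
  qed (simp add: total_degree_def)
qed

lemma total_degree_mult:
  fixes P Q :: "'a::idom poly poly"
  assumes "P \<noteq> 0" "Q \<noteq> 0"
  shows "total_degree (P * Q) = total_degree P + total_degree Q"
  using assms by (simp flip: degree_subst_y_xy add: subst_y_xy_mult degree_mult_eq)

lemma total_degree_eq_0_imp_const:
  assumes "total_degree P = 0"
  shows "P = [:[:coeff (coeff P 0) 0:]:]"
proof (rule poly_eqI)
  fix i
  show "coeff P i = coeff [:[:coeff (coeff P 0) 0:]:] i"
  proof (cases "coeff P i = 0")
    case False
    with total_degree_ge[OF False] assms have "i = 0" "degree (coeff P 0) = 0" by auto
    then show ?thesis by (metis coeff_pCons_0 degree_0_id)
  qed (auto simp: coeff_pCons split: nat.splits)
qed

section \<open>The gcd of two homogenisations\<close>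

definition is_gcd :: "'a::comm_monoid_mult \<Rightarrow> 'a \<Rightarrow> 'a \<Rightarrow> bool" where
  "is_gcd D A B \<longleftrightarrow> D dvd A \<and> D dvd B \<and> (\<forall>E. E dvd A \<longrightarrow> E dvd B \<longrightarrow> E dvd D)"

lemma is_gcd_gcd: "is_gcd (gcd a b) a b" for a b :: "'a::semiring_gcd"
  by (simp add: is_gcd_def gcd_greatest)

lemma is_gcd_unit_mult: "is_unit u \<Longrightarrow> is_gcd T A B \<Longrightarrow> is_gcd (u * T) A B"
  by (auto simp: is_gcd_def mult_unit_dvd_iff' dvd_mult_unit_iff')

lemma is_gcd_smult_gcd:
  fixes p q :: "'a::field_gcd poly"
  assumes "c \<noteq> 0"
  shows "is_gcd (smult c (gcd p q)) p q"
  using is_gcd_unit_mult[OF _ is_gcd_gcd, of "[:c:]" p q] assms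
  by (simp add: is_unit_const_poly_iff dvd_field_iff)

lemma prime_power_dvd_mult_imp_le:
  fixes p :: "'a::factorial_semiring"
  assumes "prime_elem p" "\<not> p dvd u" "p ^ k dvd p ^ a * u"
  shows "k \<le> a"
proof -
  have "u \<noteq> 0" using assms(2) by auto
  then have "multiplicity p (p ^ a * u) = a"
    using assms(1,2) by (simp add: prime_elem_multiplicity_mult_distrib not_dvd_imp_multiplicity_0)
  with assms(1,3) \<open>u \<noteq> 0\<close> show ?thesis
    by (metis no_zero_divisors power_dvd_iff_le_multiplicity power_not_zero prime_elem_def)
qed

lemma homog_factor:
  fixes d P :: "'a::field poly"
  assumes "d dvd P" "d \<noteq> 0" "tau * degree P \<le> s"
  shows "homog P s tau =
    homog d (tau * degree d) tau *
      (y_var ^ (s - tau * degree P) * homog (P div d) (tau * degree (P div d)) tau)"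
proof (cases "P = 0")
  case False
  define u where "u = P div d"
  have P: "P = u * d" using assms(1) by (simp add: u_def)
  with False have "degree P = degree u + degree d" by (simp add: degree_mult_eq)
  with assms(3)
  have "homog P s tau = homog u (s - tau * degree d) tau * homog d (tau * degree d) tau"
    by (simp add: P homog_mult_split)
  also have "homog u (s - tau * degree d) tau =
      y_var ^ (s - tau * degree P) * homog u (tau * degree u) tau"
    using \<open>degree P = _\<close> assms(3) by (simp add: y_var_power_mult_homog add_mult_distrib2)
  finally show ?thesis by (simp add: u_def mult_ac)
qed simp

lemma homog_bezout:
  fixes u v :: "'a::field_gcd poly"
  assumes "coprime u v"
  obtains M X Y
  where "y_var ^ M = X * homog u (tau * degree u) tau + Y * homog v (tau * degree v) tau"
proof -
  obtain a b where "a * u + b * v = 1"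
    using assms by (metis bezout_coefficients_fst_snd coprime_imp_gcd_eq_1)
  define M where "M = tau * (degree a + degree u + degree b + degree v)"
  have "y_var ^ M = homog (a * u) M tau + homog (b * v) M tau"
    by (simp flip: homog_1 homog_add add: \<open>a * u + b * v = 1\<close>)
  also have "\<dots> = homog a (M - tau * degree u) tau * homog u (tau * degree u) tau +
                   homog b (M - tau * degree v) tau * homog v (tau * degree v) tau"
    by (simp add: homog_mult_split M_def algebra_simps)
  finally show ?thesis by (rule that)
qed

lemma common_divisor_dvd_y_var_power:
  fixes u v :: "'a::field_gcd poly" and tau a b :: nat
  defines "U \<equiv> homog u (tau * degree u) tau" and "V \<equiv> homog v (tau * degree v) tau"
  assumes "coprime u v" and "u = 0 \<Longrightarrow> b \<le> a" and "v = 0 \<Longrightarrow> a \<le> b"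
    and "E dvd y_var ^ a * U" and "E dvd y_var ^ b * V"
  shows "E dvd y_var ^ min a b"
proof -
  obtain M X Y where M: "y_var ^ M = X * U + Y * V"
    using homog_bezout[OF assms(3)] unfolding U_def V_def by blast
  have "E dvd (y_var ^ a * U) * (y_var ^ b * X) + (y_var ^ b * V) * (y_var ^ a * Y)"
    using assms(6,7) by (rule dvd_add[OF dvd_mult2 dvd_mult2])
  also have "\<dots> = y_var ^ (a + b + M)"
    by (simp add: M power_add algebra_simps)
  finally obtain k where k: "normalize E = normalize (y_var ^ k)"
    using divides_primepow_weak[OF prime_y_var] by blast
  then have "y_var ^ k dvd E" "E dvd y_var ^ k"
    by (metis dvd_normalize_iff dvd_refl normalize_dvd_iff)+
  have power_le: "k \<le> n" if "\<not> y_var dvd W" "y_var ^ k dvd y_var ^ n * W"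
    for n and W :: "'a poly poly"
    using prime_power_dvd_mult_imp_le[OF prime_imp_prime_elem[OF prime_y_var] that] .
  have "k \<le> a" if "u \<noteq> 0"
    using power_le y_var_not_dvd_homog[OF that] dvd_trans[OF \<open>y_var ^ k dvd E\<close> assms(6)]
    unfolding U_def by blast
  moreover have "k \<le> b" if "v \<noteq> 0"
    using power_le y_var_not_dvd_homog[OF that] dvd_trans[OF \<open>y_var ^ k dvd E\<close> assms(7)]
    unfolding V_def by blast
  moreover have "u \<noteq> 0 \<or> v \<noteq> 0" using assms(3) by auto
  ultimately have "k \<le> min a b" using assms(4,5) by linarith
  then have "y_var ^ k dvd y_var ^ min a b" by (rule le_imp_power_dvd)
  with \<open>E dvd y_var ^ k\<close> show ?thesis by (rule dvd_trans)
qed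

lemma is_gcd_homog:
  fixes P Q :: "'a::field_gcd poly"
  assumes "P \<noteq> 0 \<or> Q \<noteq> 0" "tau * degree P \<le> s" "tau * degree Q \<le> s"
  defines "d \<equiv> gcd P Q"
  shows "is_gcd (homog d (tau * degree d + min (s - tau * degree P) (s - tau * degree Q)) tau)
           (homog P s tau) (homog Q s tau)"
proof -
  define a where "a = s - tau * degree P"
  define b where "b = s - tau * degree Q"
  define D where "D = homog d (tau * degree d) tau"
  define u where "u = P div d"
  define v where "v = Q div d"
  have "d \<noteq> 0" using assms(1) by (simp add: d_def)
  have P: "homog P s tau = D * (y_var ^ a * homog u (tau * degree u) tau)"
    using homog_factor[of d P tau s] \<open>d \<noteq> 0\<close> assms(2) by (simp add: D_def a_def u_def d_def)
  have Q: "homog Q s tau = D * (y_var ^ b * homog v (tau * degree v) tau)"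
    using homog_factor[of d Q tau s] \<open>d \<noteq> 0\<close> assms(3) by (simp add: D_def b_def v_def d_def)
  have T: "homog d (tau * degree d + min a b) tau = D * y_var ^ min a b"
    using y_var_power_mult_homog[of tau d "tau * degree d" "min a b"]
    by (simp add: D_def add.commute mult.commute)
  have "coprime u v"
    using assms(1) by (simp add: u_def v_def d_def div_gcd_coprime)
  have "P = d * u" "Q = d * v" by (simp_all add: u_def v_def d_def)
  then have "E dvd D * y_var ^ min a b" if "E dvd homog P s tau" "E dvd homog Q s tau" for E
  proof -
    define U where "U = y_var ^ a * homog u (tau * degree u) tau"
    define V where "V = y_var ^ b * homog v (tau * degree v) tau"
    have "E dvd gcd (D * U) (D * V)"
      using that unfolding P Q U_def[symmetric] V_def[symmetric] by (rule gcd_greatest)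
    also have "\<dots> = normalize D * gcd U V"
      by (rule gcd_mult_distrib'[symmetric])
    also have "\<dots> dvd D * y_var ^ min a b"
    proof (rule mult_dvd_mono)
      show "gcd U V dvd y_var ^ min a b"
        unfolding U_def V_def
        by (rule common_divisor_dvd_y_var_power[OF \<open>coprime u v\<close>])
          (use \<open>P = d * u\<close> \<open>Q = d * v\<close> in \<open>auto simp: a_def b_def\<close>)
    qed simp
    finally show ?thesis .
  qed
  moreover have "D * y_var ^ min a b dvd homog P s tau" "D * y_var ^ min a b dvd homog Q s tau"
    unfolding P Q by (intro mult_dvd_mono dvd_refl dvd_mult2 le_imp_power_dvd; simp)+
  ultimately show ?thesis
    unfolding is_gcd_def a_def[symmetric] b_def[symmetric] T by blast
qed

section \<open>Integer representatives of a gcd over the rationals\<close>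

lemma max_degree_common_divisor_iff:
  fixes deg :: "'a::algebraic_semidom \<Rightarrow> nat"
  assumes deg_mult: "\<And>x y. x \<noteq> 0 \<Longrightarrow> y \<noteq> 0 \<Longrightarrow> deg (x * y) = deg x + deg y"
    and deg_eq_0: "\<And>x. x \<noteq> 0 \<Longrightarrow> deg x = 0 \<Longrightarrow> is_unit x"
    and T: "is_gcd T A B" "T \<noteq> 0"
  shows "D dvd A \<and> D dvd B \<and> (\<forall>E. E dvd A \<and> E dvd B \<longrightarrow> deg E \<le> deg D) \<longleftrightarrow>
         (\<exists>u. is_unit u \<and> D = u * T)"
proof
  assume D: "D dvd A \<and> D dvd B \<and> (\<forall>E. E dvd A \<and> E dvd B \<longrightarrow> deg E \<le> deg D)"
  then obtain R where R: "T = D * R"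
    using T(1) unfolding is_gcd_def by blast
  with T(2) have "D \<noteq> 0" "R \<noteq> 0" by auto
  then have "deg T = deg D + deg R" by (simp add: R deg_mult)
  moreover have "deg T \<le> deg D" using D T(1) unfolding is_gcd_def by blast
  ultimately have "is_unit R" using deg_eq_0 \<open>R \<noteq> 0\<close> by simp
  then obtain R' where "1 = R * R'" by (elim dvdE)
  then have "D = R' * T" by (metis R mult.commute mult.left_commute mult_1_right)
  moreover have "is_unit R'" using \<open>1 = R * R'\<close> by (metis dvd_triv_right)
  ultimately show "\<exists>u. is_unit u \<and> D = u * T" by blast
next
  assume "\<exists>u. is_unit u \<and> D = u * T"
  then obtain u where u: "is_unit u" "D = u * T" by blast
  have "deg E \<le> deg D" if "E dvd T" for E
  proof -
    obtain R where "T = E * R" using \<open>E dvd T\<close> by (elim dvdE)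
    with T(2) have "deg T = deg E + deg R" by (simp add: deg_mult)
    moreover have "u \<noteq> 0" using u(1) by auto
    with T(2) have "deg D = deg u + deg T" by (simp add: u(2) deg_mult)
    ultimately show ?thesis by simp
  qed
  with u T(1) show "D dvd A \<and> D dvd B \<and> (\<forall>E. E dvd A \<and> E dvd B \<longrightarrow> deg E \<le> deg D)"
    unfolding is_gcd_def by (auto simp: mult_unit_dvd_iff')
qed

lemma ex_unit_mult_iff_smult:
  fixes X Y :: "'a::{idom_divide,algebraic_semidom} poly"
  shows "(\<exists>u. is_unit u \<and> X = u * Y) \<longleftrightarrow> (\<exists>c. is_unit c \<and> X = smult c Y)"
proof
  assume "\<exists>u. is_unit u \<and> X = u * Y"
  then obtain u where "is_unit u" "X = u * Y" by blast
  then obtain c where "is_unit c" "u = [:c:]" by (auto simp: is_unit_poly_iff)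
  with \<open>X = u * Y\<close> show "\<exists>c. is_unit c \<and> X = smult c Y" by auto
next
  assume "\<exists>c. is_unit c \<and> X = smult c Y"
  then obtain c where "is_unit c" "X = [:c:] * Y" by auto
  moreover have "is_unit [:c:]" using \<open>is_unit c\<close> by (simp add: is_unit_const_poly_iff)
  ultimately show "\<exists>u. is_unit u \<and> X = u * Y" by blast
qed

lemma Ints_if_multiple_of_primitive:
  fixes p :: "int poly" and c :: rat
  assumes "content p = 1" and "\<And>i. c * of_int (coeff p i) \<in> \<int>"
  shows "c \<in> \<int>"
proof -
  obtain a b where ab: "quotient_of c = (a, b)" by force
  then have "b > 0" "coprime a b" "c = of_int a / of_int b"
    by (simp_all add: quotient_of_denom_pos quotient_of_coprime quotient_of_div)
  have "b dvd coeff p i" for i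
  proof -
    obtain k where k: "c * of_int (coeff p i) = of_int k" using assms(2)[of i] by (elim Ints_cases)
    have "rat_of_int (a * coeff p i) = of_int b * (c * of_int (coeff p i))"
      using \<open>b > 0\<close> \<open>c = _\<close> by simp
    also have "\<dots> = of_int (k * b)" using k by simp
    finally have "a * coeff p i = k * b" by (simp only: of_int_eq_iff)
    with \<open>coprime a b\<close> show ?thesis
      by (metis coprime_commute coprime_dvd_mult_right_iff dvd_triv_right)
  qed
  then have "b dvd content p" by (simp flip: const_poly_dvd_iff_dvd_content add: const_poly_dvd_iff)
  with assms(1) \<open>b > 0\<close> have "b = 1" by simp
  with \<open>c = _\<close> show ?thesis by simp
qed

lemma common_denominator:
  fixes p :: "rat poly"
  obtains n :: int where "n > 0" "\<And>i. of_int n * coeff p i \<in> \<int>"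
proof -
  have "\<exists>n::int. n > 0 \<and> (\<forall>i. of_int n * coeff p i \<in> \<int>)"
  proof (induction p)
    case (pCons a p)
    then obtain n where n: "n > 0" "\<forall>i. of_int n * coeff p i \<in> \<int>" by blast
    obtain x b where "quotient_of a = (x, b)" by force
    then have "b > 0" "a = of_int x / of_int b"
      by (simp_all add: quotient_of_denom_pos quotient_of_div)
    have "of_int (n * b) * coeff (pCons a p) i \<in> \<int>" for i
    proof (cases i)
      case (Suc j)
      have "of_int (n * b) * coeff p j = of_int b * (of_int n * coeff p j)" by simp
      also have "\<dots> \<in> \<int>" using n(2) by simp
      finally show ?thesis using Suc by simp
    qed (use \<open>b > 0\<close> \<open>a = _\<close> in simp)
    with n(1) \<open>b > 0\<close> show ?case by (intro exI[of _ "n * b"]) simp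
  qed (auto intro: exI[of _ 1])
  with that show ?thesis by blast
qed

lemma primitive_int_poly_multiple:
  fixes p :: "rat poly"
  assumes "p \<noteq> 0"
  obtains q :: "int poly" and c :: rat
  where "c \<noteq> 0" "content q = 1" "lead_coeff q > 0" "ratQ1 q = smult c p"
proof -
  obtain n :: int where "n > 0" "\<And>i. coeff (smult (of_int n) p) i \<in> \<int>"
    using common_denominator by auto
  then obtain r where r: "smult (of_int n) p = ratQ1 r"
    unfolding ratQ1_def by (elim intpolyE) blast
  define r' where "r' = smult (sgn (lead_coeff r)) r"
  define q where "q = primitive_part r'"
  have "r \<noteq> 0"
    using r assms \<open>n > 0\<close> by (metis of_int_0_less_iff ratQ1_eq_0_iff smult_eq_0_iff less_irrefl)
  then have "r' \<noteq> 0" "lead_coeff r' > 0"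
    by (simp_all add: r'_def sgn_0_0 sgn_mult_abs abs_sgn[symmetric] mult.commute[of "sgn _"])
  have "content r' > 0"
    using \<open>r' \<noteq> 0\<close> normalize_content[of r'] by (simp add: abs_of_nonneg less_le)
  have r'q: "r' = smult (content r') q" by (simp add: q_def)
  then have "lead_coeff r' = content r' * lead_coeff q" by (metis lead_coeff_smult)
  with \<open>lead_coeff r' > 0\<close> \<open>content r' > 0\<close> have "lead_coeff q > 0"
    by (simp add: zero_less_mult_iff)
  have "ratQ1 r' = smult (of_int (content r')) (ratQ1 q)"
    using r'q by (metis ratQ1_smult)
  then have "ratQ1 q = smult (1 / of_int (content r')) (ratQ1 r')"
    using \<open>content r' > 0\<close> \<open>r' \<noteq> 0\<close> by simp
  also have "ratQ1 r' = smult (of_int (sgn (lead_coeff r) * n)) p"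
    by (simp add: r'_def ratQ1_smult flip: r)
  finally have "ratQ1 q = smult (of_int (sgn (lead_coeff r) * n) / of_int (content r')) p"
    by simp
  moreover have "content q = 1" using \<open>r' \<noteq> 0\<close> by (simp add: q_def)
  moreover have "rat_of_int (sgn (lead_coeff r) * n) / of_int (content r') \<noteq> 0"
    using \<open>r \<noteq> 0\<close> \<open>r' \<noteq> 0\<close> \<open>n > 0\<close> by (simp add: sgn_0_0)
  ultimately show ?thesis
    using that \<open>lead_coeff q > 0\<close> by blast
qed

lemma The_least_eqI:
  fixes L :: "'a \<Rightarrow> 'b::order"
  assumes "C X" and "\<And>D. C D \<Longrightarrow> L X \<le> L D \<and> (L D = L X \<longrightarrow> D = X)"
  shows "(THE D. C D \<and> (\<forall>D'. C D' \<longrightarrow> L D \<le> L D')) = X"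
  by (rule the_equality) (use assms in \<open>blast, metis order.antisym\<close>)

lemma gcdQ1_eqI:
  assumes "content d = 1" "lead_coeff d > 0" "is_gcd (ratQ1 d) (ratQ1 F) (ratQ1 G)"
  shows "gcdQ1 F G = d"
proof -
  have "ratQ1 d \<noteq> 0" using assms(1) by auto
  have cand: "gcd_cand1 F G D \<longleftrightarrow> (\<exists>c. c \<noteq> 0 \<and> ratQ1 D = smult c (ratQ1 d)) \<and> lead_coeff D > 0"
    for D
  proof -
    have "(ratQ1 D dvd ratQ1 F \<and> ratQ1 D dvd ratQ1 G \<and>
        (\<forall>E. E dvd ratQ1 F \<and> E dvd ratQ1 G \<longrightarrow> degree E \<le> degree (ratQ1 D))) \<longleftrightarrow>
        (\<exists>u. is_unit u \<and> ratQ1 D = u * ratQ1 d)"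
      by (rule max_degree_common_divisor_iff[where deg = degree])
        (use assms(3) \<open>ratQ1 d \<noteq> 0\<close> in \<open>auto simp: degree_mult_eq is_unit_iff_degree\<close>)
    also have "\<dots> \<longleftrightarrow> (\<exists>c. c \<noteq> 0 \<and> ratQ1 D = smult c (ratQ1 d))"
      by (simp add: ex_unit_mult_iff_smult dvd_field_iff)
    finally show ?thesis unfolding gcd_cand1_def degree_ratQ1 by blast
  qed
  have "lead_coeff d \<le> lead_coeff D \<and> (lead_coeff D = lead_coeff d \<longrightarrow> D = d)"
    if "gcd_cand1 F G D" for D
  proof -
    from that obtain c where c: "ratQ1 D = smult c (ratQ1 d)" and "lead_coeff D > 0"
      unfolding cand by blast
    have "c \<in> \<int>"
      using assms(1)
      by (rule Ints_if_multiple_of_primitive) (metis c coeff_ratQ1 coeff_smult Ints_of_int)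
    then obtain k where "c = of_int k" by (elim Ints_cases)
    with c have "D = smult k d" by (simp flip: ratQ1_smult)
    with \<open>lead_coeff D > 0\<close> assms(2) show ?thesis by (auto simp: zero_less_mult_iff)
  qed
  moreover have "gcd_cand1 F G d"
    unfolding cand using assms(2) by (auto intro: exI[of _ 1])
  ultimately show ?thesis
    unfolding gcdQ1_def by (rule The_least_eqI[rotated])
qed

lemma gcdQ2_whom_eqI:
  assumes "content d = 1" "lead_coeff d > 0" "is_gcd (ratQ2 (whom d e tau)) (ratQ2 A) (ratQ2 B)"
  shows "gcdQ2 A B = whom d e tau"
proof -
  define S where "S = whom d e tau"
  have "ratQ2 S \<noteq> 0" using assms(1) by (auto simp: S_def ratQ2_whom)
  have "lead_coeff (lead_coeff S) = lead_coeff d"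
    unfolding S_def whom_eq_homog by (rule lead_coeff_lead_coeff_homog)
  have unit_iff: "is_unit c \<longleftrightarrow> (\<exists>a. a \<noteq> 0 \<and> c = [:a:])" for c :: "rat poly"
    by (auto simp: is_unit_poly_iff dvd_field_iff)
  have cand: "gcd_cand2 A B D \<longleftrightarrow>
      (\<exists>c. c \<noteq> 0 \<and> ratQ2 D = smult [:c:] (ratQ2 S)) \<and> lead_coeff (lead_coeff D) > 0" for D
  proof -
    have "(ratQ2 D dvd ratQ2 A \<and> ratQ2 D dvd ratQ2 B \<and>
        (\<forall>E. E dvd ratQ2 A \<and> E dvd ratQ2 B \<longrightarrow> total_degree E \<le> total_degree (ratQ2 D))) \<longleftrightarrow>
        (\<exists>u. is_unit u \<and> ratQ2 D = u * ratQ2 S)"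
    proof (rule max_degree_common_divisor_iff[where deg = total_degree])
      show "is_unit X" if "X \<noteq> 0" "total_degree X = 0" for X :: "rat poly poly"
        using that total_degree_eq_0_imp_const[OF that(2)] unit_iff
        by (metis is_unit_const_poly_iff pCons_0_0)
    qed (use assms(3) \<open>ratQ2 S \<noteq> 0\<close> in \<open>auto simp: S_def total_degree_mult\<close>)
    also have "\<dots> \<longleftrightarrow> (\<exists>c. is_unit c \<and> ratQ2 D = smult c (ratQ2 S))"
      by (rule ex_unit_mult_iff_smult)
    also have "\<dots> \<longleftrightarrow> (\<exists>c. c \<noteq> 0 \<and> ratQ2 D = smult [:c:] (ratQ2 S))"
      unfolding unit_iff by blast
    finally show ?thesis unfolding gcd_cand2_def total_degree_ratQ2 by blast
  qed
  have "lead_coeff (lead_coeff S) \<le> lead_coeff (lead_coeff D) \<and>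
      (lead_coeff (lead_coeff D) = lead_coeff (lead_coeff S) \<longrightarrow> D = S)"
    if "gcd_cand2 A B D" for D
  proof -
    from that obtain c
      where c: "ratQ2 D = smult [:c:] (ratQ2 S)" and "lead_coeff (lead_coeff D) > 0"
      unfolding cand by blast
    have coeffs: "of_int (coeff (coeff D i) j) = c * of_int (coeff (coeff S i) j)" for i j
      using arg_cong[OF c, of "\<lambda>X. coeff (coeff X i) j"] by (simp add: coeff_coeff_ratQ2)
    have "c \<in> \<int>"
    proof (rule Ints_if_multiple_of_primitive[OF assms(1)])
      fix i
      have "coeff (coeff S i) (e - tau * i) = coeff d i"
        by (simp add: S_def whom_eq_homog coeff_homog)
      with coeffs[of i "e - tau * i"] show "c * of_int (coeff d i) \<in> \<int>"
        by (metis Ints_of_int)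
    qed
    then obtain k where "c = of_int k" by (elim Ints_cases)
    with coeffs have "coeff (coeff D i) j = k * coeff (coeff S i) j" for i j
      by (metis of_int_eq_iff of_int_mult)
    then have "D = smult [:k:] S"
      by (simp add: poly_eq_iff)
    with \<open>lead_coeff (lead_coeff D) > 0\<close> assms(2) \<open>lead_coeff (lead_coeff S) = _\<close> show ?thesis
      by (auto simp: zero_less_mult_iff simp flip: one_pCons)
  qed
  moreover have "gcd_cand2 A B S"
    unfolding cand using assms(2) \<open>lead_coeff (lead_coeff S) = _\<close>
    by (auto intro: exI[of _ 1] simp flip: one_pCons)
  ultimately show ?thesis
    unfolding gcdQ2_def S_def[symmetric] by (rule The_least_eqI[rotated])
qed

lemma gcdQ2_homog_eq:
  fixes P Q :: "rat poly"
  assumes "ratQ2 A = homog P s tau" "ratQ2 B = homog Q s tau"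
    and "P \<noteq> 0 \<or> Q \<noteq> 0" "tau * degree P \<le> s" "tau * degree Q \<le> s"
    and "c \<noteq> 0" "content d = 1" "lead_coeff d > 0" "ratQ1 d = smult c (gcd P Q)"
  defines "e \<equiv> tau * degree (gcd P Q) + min (s - tau * degree P) (s - tau * degree Q)"
  shows "gcdQ2 A B = whom d e tau"
proof (rule gcdQ2_whom_eqI[OF assms(7,8)])
  have "is_unit [:[:c:]:]" using assms(6) by (simp add: is_unit_const_poly_iff dvd_field_iff)
  then have "is_gcd ([:[:c:]:] * homog (gcd P Q) e tau) (homog P s tau) (homog Q s tau)"
    unfolding e_def by (rule is_gcd_unit_mult[OF _ is_gcd_homog[OF assms(3-5)]])
  moreover have "ratQ2 (whom d e tau) = [:[:c:]:] * homog (gcd P Q) e tau"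
    by (simp add: ratQ2_whom assms(9) homog_smult)
  ultimately show "is_gcd (ratQ2 (whom d e tau)) (ratQ2 A) (ratQ2 B)"
    by (simp add: assms(1,2))
qed

lemma weight_bounds:
  fixes upsilon m tau a b :: nat
  assumes "upsilon \<in> {1, 2}" and "tau > 0" and "m = 1 \<or> upsilon * tau = 1"
    and "max (real a / 2) (real b / 3) = 2 * real m / (real upsilon * real tau)"
  defines "sg \<equiv> if upsilon = 1 then 2 * m else 1"
  shows "tau * a \<le> 2 * sg" "tau * b \<le> 3 * sg"
proof -
  have "real upsilon * real tau > 0" using assms(1,2) by auto
  with assms(4)
  have "real (a * upsilon * tau) \<le> real (4 * m)" "real (b * upsilon * tau) \<le> real (6 * m)"
    by (auto simp: max_def field_simps split: if_splits)
  then have "a * upsilon * tau \<le> 4 * m" "b * upsilon * tau \<le> 6 * m"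
    by (simp_all only: of_nat_le_iff)
  moreover have "upsilon = 1 \<or> (upsilon = 2 \<and> m = 1)" using assms(1-3) by auto
  ultimately show "tau * a \<le> 2 * sg" "tau * b \<le> 3 * sg"
    by (auto simp: sg_def mult.commute mult.left_commute)
qed

theorem lemma2p2:
  fixes upsilon m tau :: nat and f g :: "int poly" and S :: "int poly poly"
  assumes "upsilon \<in> {1, 2}" and "m > 0" and "tau > 0"
    and "m = 1 \<or> upsilon * tau = 1"
    and "smult 4 (f ^ 3) + smult 27 (g ^ 2) \<noteq> 0"
    and "\<not> (\<exists>r::real. poly (map_poly of_int f) r = 0 \<and> poly (map_poly of_int g) r = 0)"
    and "max (real (degree f) / 2) (real (degree g) / 3) = 2 * real m / (real upsilon * real tau)"
    and "S = gcdQ2 ((whom f (2 * (if upsilon = 1 then 2 * m else 1)) tau) ^ 3)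
                   ((whom g (3 * (if upsilon = 1 then 2 * m else 1)) tau) ^ 2)"
  shows "gcdQ1 (f ^ 3) (g ^ 2) = at_y1 S"
proof -
  define sg where "sg = (if upsilon = 1 then 2 * m else 1)"
  define P Q where "P = ratQ1 (f ^ 3)" and "Q = ratQ1 (g ^ 2)"
  have f: "tau * degree f \<le> 2 * sg" and g: "tau * degree g \<le> 3 * sg"
    using weight_bounds[OF assms(1,3,4,7)] by (simp_all add: sg_def)
  have A: "ratQ2 (whom f (2 * sg) tau ^ 3) = homog P (6 * sg) tau"
    using ratQ2_whom_power[OF f, of 3] by (simp add: P_def)
  have B: "ratQ2 (whom g (3 * sg) tau ^ 2) = homog Q (6 * sg) tau"
    using ratQ2_whom_power[OF g, of 2] by (simp add: Q_def)
  have degrees: "tau * degree P \<le> 6 * sg" "tau * degree Q \<le> 6 * sg"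
    using weighted_degree_power_le[OF f, of 3] weighted_degree_power_le[OF g, of 2]
    by (simp_all add: P_def Q_def)
  have "P \<noteq> 0 \<or> Q \<noteq> 0" using assms(5) by (auto simp: P_def Q_def)
  then have "gcd P Q \<noteq> 0" by simp
  then obtain d c where d: "c \<noteq> 0" "content d = 1" "lead_coeff d > 0" "ratQ1 d = smult c (gcd P Q)"
    by (rule primitive_int_poly_multiple)
  have "at_y1 S = d"
    using assms(8) gcdQ2_homog_eq[OF A B \<open>P \<noteq> 0 \<or> Q \<noteq> 0\<close> degrees d]
    by (simp add: sg_def at_y1_whom)
  moreover have "gcdQ1 (f ^ 3) (g ^ 2) = d"
    using gcdQ1_eqI[OF d(2,3)] is_gcd_smult_gcd[OF d(1)] d(4) by (simp add: P_def Q_def)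
  ultimately show ?thesis by simp
qed

end
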